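(* Let $G$ be a biconnected series-parallel graph without transitive edges, let $(s,t)$ be a separation pair of $G$, and let $G'$ be a light component of $G$ with respect to $(s,t)$. Then $G'$ is of one of the following forms: (1) $G'$ is a path $s - w - t$ of length two (a single internal vertex $w$ adjacent to both poles); (2) the internal vertices of $G'$ are a vertex $t'$ and a nonempty independent set $V_s$, where $t'$ is adjacent to $t$, and every vertex of $V_s$ is adjacent to $s$ and to $t'$ (and to no other vertex), $t'$ is not adjacent to $s$, and no vertex of $V_s$ is adjacent to $t$; (3) symmetrically, the internal vertices of $G'$ are a vertex $s'$ adjacent to $s$ and a nonempty independent set $V_t$ of vertices each adjacent to $t$ and $s'$ (and to no other vertex), with $s'$ not adjacent to $t$ and no vertex of $V_t$ adjacent to $s$. In particular, if $G'$ has more than one internal vertex, then the set $V_s$ of internal neighbours of $s$ and the set $V_t$ of internal neighbours of $t$ are disjoint independent sets covering all internal vertices, and $|V_s|=1$ or $|V_t|=1$.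
   Context: A biconnected graph is series-parallel if it contains no subdivision of $K_4$. A separation pair of a biconnected graph $G$ is a pair $(s,t)$ of vertices with $G-s-t$ disconnected; a transitive edge is an edge joining the two vertices of a separation pair. A component w.r.t. $(s,t)$ is the subgraph induced by $s$, $t$ and the vertex set of one connected component of $G-s-t$; $s,t$ are its poles and the other vertices are internal vertices. A component is heavy if it has an internal vertex adjacent to neither $s$ nor $t$, and light otherwise (i.e., every internal vertex is adjacent to $s$ or to $t$). *)

theory Defs
  imports Main
begin

definition graph :: "'a set \<Rightarrow> ('a \<Rightarrow> 'a \<Rightarrow> bool) \<Rightarrow> bool" where
  "graph V E \<longleftrightarrow> finite V \<and> (\<forall>x y. E x y \<longrightarrow> x \<in> V \<and> y \<in> V \<and> x \<noteq> y \<and> E y x)"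

text \<open>The subgraph induced by S is connected (vacuously so if S is empty).\<close>
definition connected_in :: "('a \<Rightarrow> 'a \<Rightarrow> bool) \<Rightarrow> 'a set \<Rightarrow> bool" where
  "connected_in E S \<longleftrightarrow>
     (\<forall>x\<in>S. \<forall>y\<in>S. (\<lambda>u v. E u v \<and> u \<in> S \<and> v \<in> S)\<^sup>*\<^sup>* x y)"

definition biconnected :: "'a set \<Rightarrow> ('a \<Rightarrow> 'a \<Rightarrow> bool) \<Rightarrow> bool" where
  "biconnected V E \<longleftrightarrow> graph V E \<and> card V \<ge> 3 \<and> connected_in E V \<and>
     (\<forall>v\<in>V. connected_in E (V - {v}))"

definition is_path :: "'a set \<Rightarrow> ('a \<Rightarrow> 'a \<Rightarrow> bool) \<Rightarrow> 'a list \<Rightarrow> bool" where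
  "is_path V E p \<longleftrightarrow> distinct p \<and> length p \<ge> 2 \<and> set p \<subseteq> V \<and>
     (\<forall>i. Suc i < length p \<longrightarrow> E (p ! i) (p ! Suc i))"

definition inner_vertices :: "'a list \<Rightarrow> 'a set" where
  "inner_vertices p = set (butlast (tl p))"

definition has_K4_subdivision :: "'a set \<Rightarrow> ('a \<Rightarrow> 'a \<Rightarrow> bool) \<Rightarrow> bool" where
  "has_K4_subdivision V E \<longleftrightarrow>
     (\<exists>(b :: nat \<Rightarrow> 'a) (P :: nat \<Rightarrow> nat \<Rightarrow> 'a list).
        inj_on b {0..<4} \<and> b ` {0..<4} \<subseteq> V \<and>
        (\<forall>i j. i < j \<and> j < 4 \<longrightarrow>
           is_path V E (P i j) \<and> hd (P i j) = b i \<and> last (P i j) = b j \<and>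
           inner_vertices (P i j) \<inter> b ` {0..<4} = {}) \<and>
        (\<forall>i j k l. i < j \<and> j < 4 \<and> k < l \<and> l < 4 \<and> (i, j) \<noteq> (k, l) \<longrightarrow>
           inner_vertices (P i j) \<inter> inner_vertices (P k l) = {}))"

definition series_parallel :: "'a set \<Rightarrow> ('a \<Rightarrow> 'a \<Rightarrow> bool) \<Rightarrow> bool" where
  "series_parallel V E \<longleftrightarrow> biconnected V E \<and> \<not> has_K4_subdivision V E"

definition separation_pair :: "'a set \<Rightarrow> ('a \<Rightarrow> 'a \<Rightarrow> bool) \<Rightarrow> 'a \<Rightarrow> 'a \<Rightarrow> bool" where
  "separation_pair V E s t \<longleftrightarrow> s \<in> V \<and> t \<in> V \<and> s \<noteq> t \<and> \<not> connected_in E (V - {s, t})"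

definition no_transitive_edges :: "'a set \<Rightarrow> ('a \<Rightarrow> 'a \<Rightarrow> bool) \<Rightarrow> bool" where
  "no_transitive_edges V E \<longleftrightarrow> (\<forall>s t. separation_pair V E s t \<longrightarrow> \<not> E s t)"

definition conn_component :: "('a \<Rightarrow> 'a \<Rightarrow> bool) \<Rightarrow> 'a set \<Rightarrow> 'a set \<Rightarrow> bool" where
  "conn_component E S C \<longleftrightarrow> C \<noteq> {} \<and> C \<subseteq> S \<and> connected_in E C \<and>
     (\<forall>D. C \<subseteq> D \<and> D \<subseteq> S \<and> connected_in E D \<longrightarrow> D = C)"

text \<open>The component w.r.t. (s,t) is the subgraph induced by C \<union> {s,t}, where C is
a connected component of G - s - t; C is its set of internal vertices.\<close>
definition light_component ::
  "'a set \<Rightarrow> ('a \<Rightarrow> 'a \<Rightarrow> bool) \<Rightarrow> 'a \<Rightarrow> 'a \<Rightarrow> 'a set \<Rightarrow> bool" where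
  "light_component V E s t C \<longleftrightarrow> conn_component E (V - {s, t}) C \<and>
     (\<forall>w\<in>C. E s w \<or> E t w)"

definition independent :: "('a \<Rightarrow> 'a \<Rightarrow> bool) \<Rightarrow> 'a set \<Rightarrow> bool" where
  "independent E S \<longleftrightarrow> (\<forall>x\<in>S. \<forall>y\<in>S. \<not> E x y)"

end

theory Submission
  imports Defs "HOL-Library.Transitive_Closure_Table"
begin

(* Since G - s - t has a component other than C and G is biconnected, s and t
   are joined by a walk avoiding C; it serves as the s-t branch path of every K4 subdivision
   built below.  If C has more than one vertex, no vertex of C is adjacent to both poles, so C
   splits into the s-neighbours Vs and the t-neighbours Vt.  An edge inside Vs would produce
   either a K4 subdivision or a separation pair {s, q} joined by the transitive edge sq, so
   Vs and Vt are independent.  As C is connected, the bipartite graph between Vs and Vt would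
   contain an alternating path a-c-b-d if both sides had two vertices, and such a path closes a
   K4 subdivision with s and t.  Finally, if Vt = {t'}, every vertex of Vs has a second
   neighbour by biconnectivity, which can only be t'. *)

section \<open>Walks inside a vertex set\<close>

definition induced :: "('a \<Rightarrow> 'a \<Rightarrow> bool) \<Rightarrow> 'a set \<Rightarrow> 'a \<Rightarrow> 'a \<Rightarrow> bool" where
  "induced E S u v \<longleftrightarrow> E u v \<and> u \<in> S \<and> v \<in> S"

lemma connected_in_iff_induced:
  "connected_in E S \<longleftrightarrow> (\<forall>x\<in>S. \<forall>y\<in>S. (induced E S)\<^sup>*\<^sup>* x y)"
  unfolding connected_in_def induced_def by simp

lemma induced_edge: "E u v \<Longrightarrow> u \<in> S \<Longrightarrow> v \<in> S \<Longrightarrow> (induced E S)\<^sup>*\<^sup>* u v"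
  by (simp add: induced_def r_into_rtranclp)

lemma induced_two_edges:
  "E u v \<Longrightarrow> E v w \<Longrightarrow> u \<in> S \<Longrightarrow> v \<in> S \<Longrightarrow> w \<in> S \<Longrightarrow> (induced E S)\<^sup>*\<^sup>* u w"
  by (meson induced_edge rtranclp_trans)

lemma induced_rtranclp_mono:
  assumes "(induced E S)\<^sup>*\<^sup>* u v" "S \<subseteq> S'"
  shows "(induced E S')\<^sup>*\<^sup>* u v"
  using assms(1)
  by (rule rtranclp_mono[THEN predicate2D, rotated]) (use assms(2) in \<open>auto simp: induced_def\<close>)

lemma induced_rtranclp_sym:
  assumes "symp E" "(induced E S)\<^sup>*\<^sup>* u v"
  shows "(induced E S)\<^sup>*\<^sup>* v u"
proof -
  have "symp (induced E S)"
    using assms(1) by (auto simp: induced_def symp_def)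
  then show ?thesis
    using assms(2) by (metis symp_rtranclp sympD)
qed

lemma induced_rtranclp_closed:
  assumes "(induced E S)\<^sup>*\<^sup>* u v" "u \<in> X" "\<forall>x\<in>X. \<forall>y\<in>S. E x y \<longrightarrow> y \<in> X"
  shows "v \<in> X"
  using assms(1,2) by induction (use assms(3) in \<open>auto simp: induced_def\<close>)

lemma induced_rtranclp_within_reachable:
  assumes "(induced E S)\<^sup>*\<^sup>* u x"
  shows "(induced E {v. (induced E S)\<^sup>*\<^sup>* u v})\<^sup>*\<^sup>* u x" (is "(induced E ?R)\<^sup>*\<^sup>* u x")
  using assms
proof (induction rule: rtranclp_induct)
  case (step y z)
  have "(induced E S)\<^sup>*\<^sup>* u z"
    using step.hyps by (rule rtranclp.rtrancl_into_rtrancl)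
  then have "induced E ?R y z"
    using step.hyps by (simp add: induced_def)
  with step.IH show ?case by simp
qed simp

lemma graph_symp: "graph V E \<Longrightarrow> symp E"
  unfolding graph_def symp_def by blast

section \<open>Subdivisions of K4\<close>

lemma is_path_if_induced_rtranclp:
  assumes "graph V E" "(induced E S)\<^sup>*\<^sup>* a b" "a \<noteq> b"
  obtains p where "is_path V E p" "hd p = a" "last p = b" "inner_vertices p \<subseteq> S - {a, b}"
proof -
  obtain xs where xs: "rtrancl_path (induced E S) a xs b" "distinct (a # xs)"
    using assms(2) rtrancl_path_distinct by (metis rtranclp_eq_rtrancl_path)
  with assms(3) have "xs \<noteq> []"
    by (auto elim: rtrancl_path.cases)
  then obtain ys where ys: "xs = ys @ [b]"
    using rtrancl_path_last[OF xs(1)] by (metis append_butlast_last_id)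
  have edges: "E ((a # xs) ! i) (xs ! i)" if "i < length xs" for i
    using rtrancl_path_nth[OF xs(1) that] by (simp add: induced_def)
  have xs_S: "set xs \<subseteq> S" and xs_V: "set xs \<subseteq> V"
    using rtrancl_path_Range[OF xs(1)] assms(1) by (fastforce simp: induced_def graph_def)+
  have "a \<in> V"
    using edges[of 0] \<open>xs \<noteq> []\<close> assms(1) by (simp add: graph_def)
  have "is_path V E (a # xs)"
    unfolding is_path_def using xs(2) xs_V \<open>a \<in> V\<close> edges \<open>xs \<noteq> []\<close> by (auto simp: Suc_le_eq)
  moreover have "inner_vertices (a # xs) \<subseteq> S - {a, b}"
    using xs(2) xs_S ys by (auto simp: inner_vertices_def)
  ultimately show thesis
    using that ys by simp
qed

lemma has_K4_subdivision_if_walks: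
  fixes b :: "nat \<Rightarrow> 'a" and S :: "nat \<Rightarrow> nat \<Rightarrow> 'a set"
  assumes "graph V E" "inj_on b {0..<4}"
    and walks: "\<forall>i j. i < j \<and> j < 4 \<longrightarrow>
      (induced E (S i j))\<^sup>*\<^sup>* (b i) (b j) \<and> disjnt (S i j - {b i, b j}) (b ` {0..<4})"
    and interiors_disjoint: "\<forall>i j k l. i < j \<and> j < 4 \<and> k < l \<and> l < 4 \<and> (i, j) \<noteq> (k, l) \<longrightarrow>
      disjnt (S i j - {b i, b j}) (S k l - {b k, b l})"
  shows "has_K4_subdivision V E"
proof -
  have "\<exists>p. is_path V E p \<and> hd p = b i \<and> last p = b j \<and> inner_vertices p \<subseteq> S i j - {b i, b j}"
    if "i < j" "j < 4" for i j
  proof -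
    have "b i \<noteq> b j"
      using assms(2) that by (auto dest: inj_onD)
    moreover have "(induced E (S i j))\<^sup>*\<^sup>* (b i) (b j)"
      using walks that by blast
    ultimately obtain p where "is_path V E p" "hd p = b i" "last p = b j"
        "inner_vertices p \<subseteq> S i j - {b i, b j}"
      using is_path_if_induced_rtranclp[OF assms(1)] by blast
    then show ?thesis by blast
  qed
  then obtain P where P: "\<forall>i j. i < j \<and> j < 4 \<longrightarrow> is_path V E (P i j) \<and> hd (P i j) = b i \<and>
      last (P i j) = b j \<and> inner_vertices (P i j) \<subseteq> S i j - {b i, b j}"
    by metis
  have "b ` {0..<4} \<subseteq> V"
  proof
    fix v assume "v \<in> b ` {0..<4}"
    then obtain i where "i < 4" "v = b i"
      by auto
    have ends: "hd p \<in> V" "last p \<in> V" if "is_path V E p" for p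
      using that unfolding is_path_def by (metis hd_in_set last_in_set list.size(3) not_numeral_le_zero subsetD)+
    show "v \<in> V"
    proof (cases "i = 3")
      case True
      then show ?thesis
        using P[rule_format, of 0 3] ends(2)[of "P 0 3"] \<open>v = b i\<close> by simp
    next
      case False
      then show ?thesis
        using P[rule_format, of i 3] ends(1)[of "P i 3"] \<open>v = b i\<close> \<open>i < 4\<close> by simp
    qed
  qed
  moreover have "\<forall>i j. i < j \<and> j < 4 \<longrightarrow>
      is_path V E (P i j) \<and> hd (P i j) = b i \<and> last (P i j) = b j \<and>
      inner_vertices (P i j) \<inter> b ` {0..<4} = {}"
  proof (intro allI impI)
    fix i j :: nat assume ij: "i < j \<and> j < 4"
    show "is_path V E (P i j) \<and> hd (P i j) = b i \<and> last (P i j) = b j \<and>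
        inner_vertices (P i j) \<inter> b ` {0..<4} = {}"
      using P[rule_format, OF ij] walks[rule_format, OF ij] unfolding disjnt_def by blast
  qed
  moreover have "\<forall>i j k l. i < j \<and> j < 4 \<and> k < l \<and> l < 4 \<and> (i, j) \<noteq> (k, l) \<longrightarrow>
      inner_vertices (P i j) \<inter> inner_vertices (P k l) = {}"
  proof (intro allI impI)
    fix i j k l :: nat assume ijkl: "i < j \<and> j < 4 \<and> k < l \<and> l < 4 \<and> (i, j) \<noteq> (k, l)"
    then show "inner_vertices (P i j) \<inter> inner_vertices (P k l) = {}"
      using P[rule_format, of i j] P[rule_format, of k l] interiors_disjoint[rule_format, OF ijkl]
      unfolding disjnt_def by blast
  qed
  ultimately show ?thesis
    unfolding has_K4_subdivision_def using assms(2) by blast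
qed

lemma all_pairs_less_4:
  "(\<forall>i j. i < j \<and> j < (4::nat) \<longrightarrow> P i j) \<longleftrightarrow> P 0 1 \<and> P 0 2 \<and> P 0 3 \<and> P 1 2 \<and> P 1 3 \<and> P 2 3"
proof -
  have "i < j \<and> j < 4 \<longleftrightarrow> (i, j) \<in> {(0, 1), (0, 2), (0, 3), (1, 2), (1, 3), (2, 3)}" for i j :: nat
    by auto
  then show ?thesis by auto
qed

(* sorted_wrt disjnt says that the six interiors and the set of branch vertices are pairwise
   disjoint. *)
lemma has_K4_subdivisionI:
  assumes "graph V E" and "distinct [b0, b1, b2, b3]"
    and "(induced E S01)\<^sup>*\<^sup>* b0 b1" "(induced E S02)\<^sup>*\<^sup>* b0 b2" "(induced E S03)\<^sup>*\<^sup>* b0 b3"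
    and "(induced E S12)\<^sup>*\<^sup>* b1 b2" "(induced E S13)\<^sup>*\<^sup>* b1 b3" "(induced E S23)\<^sup>*\<^sup>* b2 b3"
    and "sorted_wrt disjnt [S01 - {b0, b1}, S02 - {b0, b2}, S03 - {b0, b3},
            S12 - {b1, b2}, S13 - {b1, b3}, S23 - {b2, b3}, {b0, b1, b2, b3}]"
  shows "has_K4_subdivision V E"
proof -
  define b where "b = (!) [b0, b1, b2, b3]"
  define S where "S i j = [[{}, S01, S02, S03], [{}, {}, S12, S13], [{}, {}, {}, S23]] ! i ! j" for i j
  have "inj_on b {0..<4}"
    using assms(2) by (simp add: b_def inj_on_nth)
  moreover have "b ` {0..<4} = {b0, b1, b2, b3}"
    by (auto simp: b_def atLeast0LessThan lessThan_nat_numeral)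
  then have "\<forall>i j. i < j \<and> j < 4 \<longrightarrow>
      (induced E (S i j))\<^sup>*\<^sup>* (b i) (b j) \<and> disjnt (S i j - {b i, b j}) (b ` {0..<4})"
    using assms(3-9) by (simp add: all_pairs_less_4 b_def S_def disjnt_sym)
  moreover have "\<forall>i j. i < j \<and> j < 4 \<longrightarrow> (\<forall>k l. k < l \<and> l < 4 \<longrightarrow>
      (i, j) \<noteq> (k, l) \<longrightarrow> disjnt (S i j - {b i, b j}) (S k l - {b k, b l}))"
    using assms(9) by (simp add: all_pairs_less_4 b_def S_def disjnt_sym)
  then have "\<forall>i j k l. i < j \<and> j < 4 \<and> k < l \<and> l < 4 \<and> (i, j) \<noteq> (k, l) \<longrightarrow>
      disjnt (S i j - {b i, b j}) (S k l - {b k, b l})"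
    by blast
  ultimately show ?thesis
    by (rule has_K4_subdivision_if_walks[OF assms(1)])
qed

section \<open>Connectivity and components\<close>

lemma connected_in_edge_leaving:
  assumes "connected_in E S" "x \<in> X" "x \<in> S" "y \<in> S - X"
  obtains u v where "u \<in> X" "v \<in> S - X" "E u v"
proof (rule ccontr)
  assume "\<not> thesis"
  then have closed: "\<forall>u\<in>X. \<forall>v\<in>S. E u v \<longrightarrow> v \<in> X"
    using that by blast
  have "(induced E S)\<^sup>*\<^sup>* x y"
    using assms(1,3,4) by (simp add: connected_in_iff_induced)
  then have "y \<in> X"
    using assms(2) closed by (rule induced_rtranclp_closed)
  with assms(4) show False by blast
qed

lemma connected_in_insert:
  assumes "symp E" "connected_in E C" "u \<in> C" "E u v"
  shows "connected_in E (insert v C)"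
  unfolding connected_in_iff_induced
proof (intro ballI)
  let ?R = "(induced E (insert v C))\<^sup>*\<^sup>*"
  have to_u: "?R x u" and from_u: "?R u x" if "x \<in> insert v C" for x
  proof -
    have "?R u v"
      using assms(3,4) by (simp add: induced_edge)
    moreover have "?R u x" if "x \<in> C" for x
      using assms(2,3) that unfolding connected_in_iff_induced
      by (blast intro: induced_rtranclp_mono[of E C])
    ultimately show "?R u x"
      using that by blast
    then show "?R x u"
      by (rule induced_rtranclp_sym[OF assms(1)])
  qed
  fix x y assume "x \<in> insert v C" "y \<in> insert v C"
  then show "?R x y"
    using to_u from_u by (blast intro: rtranclp_trans)
qed

lemma conn_component_closed:
  assumes "graph V E" "conn_component E S C" "u \<in> C" "v \<in> S" "E u v"
  shows "v \<in> C"
proof -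
  have "connected_in E (insert v C)"
    using connected_in_insert[OF graph_symp[OF assms(1)]] assms(2,3,5)
    by (simp add: conn_component_def)
  then have "insert v C = C"
    using assms(2,4) unfolding conn_component_def by blast
  then show ?thesis by blast
qed

lemma conn_component_reachable:
  assumes "graph V E" "u \<in> S"
  shows "conn_component E S {v. (induced E S)\<^sup>*\<^sup>* u v}" (is "conn_component E S ?R")
  unfolding conn_component_def
proof (intro conjI allI impI)
  show "?R \<noteq> {}"
    by auto
  show "?R \<subseteq> S"
  proof
    fix v assume "v \<in> ?R"
    then have "(induced E S)\<^sup>*\<^sup>* u v" by simp
    then show "v \<in> S"
      using assms(2) by (rule induced_rtranclp_closed) simp
  qed
  show "connected_in E ?R"
    unfolding connected_in_iff_induced
  proof (intro ballI)
    fix x y assume "x \<in> ?R" "y \<in> ?R"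
    then have "(induced E ?R)\<^sup>*\<^sup>* u x" "(induced E ?R)\<^sup>*\<^sup>* u y"
      by (simp_all add: induced_rtranclp_within_reachable)
    then show "(induced E ?R)\<^sup>*\<^sup>* x y"
      using induced_rtranclp_sym[OF graph_symp[OF assms(1)]] rtranclp_trans by metis
  qed
  fix D assume D: "?R \<subseteq> D \<and> D \<subseteq> S \<and> connected_in E D"
  show "D = ?R"
  proof
    show "D \<subseteq> ?R"
    proof
      fix d assume "d \<in> D"
      moreover have "u \<in> D" using D by auto
      ultimately have "(induced E D)\<^sup>*\<^sup>* u d"
        using D by (simp add: connected_in_iff_induced)
      then have "(induced E S)\<^sup>*\<^sup>* u d"
        using D by (simp add: induced_rtranclp_mono)
      then show "d \<in> ?R" by simp
    qed
  qed (use D in blast)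
qed

lemma conn_components_disjoint:
  assumes "conn_component E S C" "conn_component E S D" "v \<in> C" "v \<in> D"
  shows "C = D"
proof -
  let ?R = "(induced E (C \<union> D))\<^sup>*\<^sup>*"
  have via_v: "?R x v \<and> ?R v x" if "x \<in> X" "X \<in> {C, D}" for x X
  proof -
    have "(induced E X)\<^sup>*\<^sup>* x v \<and> (induced E X)\<^sup>*\<^sup>* v x"
      using that assms unfolding conn_component_def connected_in_iff_induced by auto
    moreover have "X \<subseteq> C \<union> D"
      using that(2) by auto
    ultimately show ?thesis
      using induced_rtranclp_mono by metis
  qed
  have "connected_in E (C \<union> D)"
    unfolding connected_in_iff_induced
  proof (intro ballI)
    fix x y assume "x \<in> C \<union> D" "y \<in> C \<union> D"
    then have "?R x v" "?R v y"
      using via_v by blast+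
    then show "?R x y" by (rule rtranclp_trans)
  qed
  moreover have "C \<union> D \<subseteq> S"
    using assms(1,2) by (simp add: conn_component_def)
  ultimately have "C \<union> D = C" "C \<union> D = D"
    using assms(1,2) unfolding conn_component_def by (metis sup_ge1 sup_ge2)+
  then show ?thesis by simp
qed

lemma separation_pairI:
  assumes "a \<in> V" "b \<in> V" "a \<noteq> b" "X \<subseteq> V - {a, b}" "x \<in> X" "y \<in> V - {a, b} - X"
    and "\<forall>u\<in>X. \<forall>v. E u v \<longrightarrow> v \<in> X \<union> {a, b}"
  shows "separation_pair V E a b"
  unfolding separation_pair_def
proof (intro conjI notI)
  assume connected: "connected_in E (V - {a, b})"
  have "x \<in> V - {a, b}"
    using assms(4,5) by blast
  then obtain u v where "u \<in> X" "v \<in> V - {a, b} - X" "E u v"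
    using connected_in_edge_leaving[OF connected assms(5) _ assms(6)] by blast
  with assms(7) show False by blast
qed (use assms(1-3) in auto)

lemma biconnected_component_has_neighbour:
  assumes "biconnected V E" "a \<in> V" "b \<in> V" "a \<noteq> b" "conn_component E (V - {a, b}) C"
  obtains w where "w \<in> C" "E a w"
proof -
  have graph: "graph V E" and connected: "connected_in E (V - {b})"
    using assms(1,3) by (auto simp: biconnected_def)
  obtain x where x: "x \<in> C" and C_sub: "C \<subseteq> V - {a, b}"
    using assms(5) by (auto simp: conn_component_def)
  have "x \<in> V - {b}" "a \<in> V - {b} - C"
    using x C_sub assms(2,4) by auto
  then obtain u v where uv: "u \<in> C" "v \<in> V - {b} - C" "E u v"
    using connected_in_edge_leaving[OF connected x] by blast
  have "v \<notin> V - {a, b}"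
    using conn_component_closed[OF graph assms(5) uv(1) _ uv(3)] uv(2) by blast
  then have "E u a"
    using uv by auto
  then show thesis
    using that uv(1) graph by (auto simp: graph_def)
qed

lemma biconnected_other_neighbour:
  assumes "biconnected V E" "v \<in> V" "a \<noteq> v"
  obtains u where "E v u" "u \<noteq> a"
proof -
  have connected: "connected_in E (V - {a})" and "card V \<ge> 3"
    using assms(1,2) by (auto simp: biconnected_def)
  have "\<not> V \<subseteq> {a, v}"
  proof
    assume "V \<subseteq> {a, v}"
    then have "card V \<le> card {a, v}"
      by (simp add: card_mono)
    also have "\<dots> \<le> 2"
      by (simp add: card_insert_if)
    finally show False
      using \<open>card V \<ge> 3\<close> by simp
  qed
  then obtain y where "y \<in> V - {a, v}"
    by blast
  moreover have "v \<in> V - {a}"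
    using assms(2,3) by blast
  ultimately obtain x u where "x \<in> {v}" "u \<in> V - {a} - {v}" "E x u"
    using connected_in_edge_leaving[OF connected, of v "{v}" y] by blast
  with that show thesis by blast
qed

lemma connected_in_subset_neighbourhood:
  assumes "connected_in E C" "a \<in> C" "\<forall>c\<in>C. E a c \<longrightarrow> (\<forall>b\<in>C. E c b \<longrightarrow> b = a)"
  shows "C \<subseteq> insert a {c \<in> C. E a c}"
proof
  fix v assume "v \<in> C"
  then have "(induced E C)\<^sup>*\<^sup>* a v"
    using assms(1,2) by (simp add: connected_in_iff_induced)
  then show "v \<in> insert a {c \<in> C. E a c}"
    by (rule induced_rtranclp_closed) (use assms(3) in auto)
qed

lemma connected_bipartite_alternating_path:
  assumes "symp E" "connected_in E (A \<union> B)" "A \<inter> B = {}" "independent E A" "independent E B"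
    and "A \<noteq> {}" "\<forall>a. A \<noteq> {a}" "\<forall>c. B \<noteq> {c}"
  obtains a c b d where "a \<in> A" "b \<in> A" "c \<in> B" "d \<in> B" "a \<noteq> b" "c \<noteq> d"
    "E a c" "E c b" "E b d"
proof -
  have far_neighbour: "\<exists>c\<in>A \<union> B. E x c \<and> (\<exists>b\<in>A \<union> B. E c b \<and> b \<noteq> x)"
    if "x \<in> X" "X \<in> {A, B}" "\<forall>x. X \<noteq> {x}" for x X
  proof (rule ccontr)
    assume "\<not> ?thesis"
    then have "A \<union> B \<subseteq> insert x {c \<in> A \<union> B. E x c}"
      using that(1,2) by (intro connected_in_subset_neighbourhood[OF assms(2)]) auto
    moreover have "\<not> E x c" if "c \<in> X" for c
      using assms(4,5) \<open>x \<in> X\<close> \<open>X \<in> {A, B}\<close> that unfolding independent_def by blast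
    ultimately have "X = {x}"
      using that(1,2) by auto
    with that(3) show False by blast
  qed
  obtain a where "a \<in> A"
    using assms(6) by blast
  then obtain c b where cb: "c \<in> A \<union> B" "E a c" "b \<in> A \<union> B" "E c b" "b \<noteq> a"
    using far_neighbour[of a A] assms(7) by blast
  have "c \<in> B" "b \<in> A"
    using cb \<open>a \<in> A\<close> assms(4,5) unfolding independent_def by blast+
  then obtain b' d where bd: "b' \<in> A \<union> B" "E c b'" "d \<in> A \<union> B" "E b' d" "d \<noteq> c"
    using far_neighbour[of c B] assms(8) by blast
  have "b' \<in> A" "d \<in> B"
    using bd \<open>c \<in> B\<close> assms(4,5) unfolding independent_def by blast+
  show thesis
  proof (cases "b' = a")
    case True
    then show thesis
      using that[of b a c d] cb bd \<open>a \<in> A\<close> \<open>b \<in> A\<close> \<open>c \<in> B\<close> \<open>d \<in> B\<close> assms(1)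
      by (auto dest: sympD)
  next
    case False
    then show thesis
      using that[of a b' c d] cb bd \<open>a \<in> A\<close> \<open>b' \<in> A\<close> \<open>c \<in> B\<close> \<open>d \<in> B\<close> by auto
  qed
qed

section \<open>Light components of series-parallel graphs\<close>

(* Form (2) of the theorem; form (3) is fan_shape E t s C. *)
definition fan_shape :: "('a \<Rightarrow> 'a \<Rightarrow> bool) \<Rightarrow> 'a \<Rightarrow> 'a \<Rightarrow> 'a set \<Rightarrow> bool" where
  "fan_shape E s t C \<longleftrightarrow> (\<exists>t' Vs. C = insert t' Vs \<and> t' \<notin> Vs \<and> Vs \<noteq> {} \<and> independent E Vs \<and>
     E t' t \<and> \<not> E t' s \<and> (\<forall>v\<in>Vs. E v s \<and> E v t' \<and> \<not> E v t \<and> (\<forall>u. E v u \<longrightarrow> u = s \<or> u = t')))"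

locale sp_light_component =
  fixes V :: "'a set" and E :: "'a \<Rightarrow> 'a \<Rightarrow> bool" and s t :: 'a and C :: "'a set"
  assumes biconnected: "biconnected V E"
    and no_K4: "\<not> has_K4_subdivision V E"
    and no_transitive_edges: "no_transitive_edges V E"
    and separation_pair: "separation_pair V E s t"
    and component: "conn_component E (V - {s, t}) C"
    and light: "\<forall>w\<in>C. E s w \<or> E t w"
begin

lemma swap_poles: "sp_light_component V E t s C"
proof -
  have "{t, s} = {s, t}" by blast
  then show ?thesis
    using biconnected no_K4 no_transitive_edges separation_pair component light
    unfolding sp_light_component_def separation_pair_def by auto
qed

lemma graph: "graph V E"
  using biconnected by (simp add: biconnected_def)

lemma E_sym: "E u v \<Longrightarrow> E v u"
  using graph by (simp add: graph_def)

lemma poles: "s \<in> V" "t \<in> V" "s \<noteq> t"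
  using separation_pair by (simp_all add: separation_pair_def)

lemma C_subset: "C \<subseteq> V - {s, t}"
  using component by (simp add: conn_component_def)

lemma C_connected: "connected_in E C"
  using component by (simp add: conn_component_def)

lemma finite_C: "finite C"
  using graph C_subset by (metis finite_Diff finite_subset graph_def)

lemma neighbour_of_C: "u \<in> C \<Longrightarrow> E u v \<Longrightarrow> v \<in> C \<or> v = s \<or> v = t"
  using conn_component_closed[OF graph component] graph by (fastforce simp: graph_def)

lemma s_neighbour_in_C: obtains w where "w \<in> C" "E s w"
  using biconnected_component_has_neighbour[OF biconnected poles component] by blast

lemma outer_walk:
  obtains D where "D \<subseteq> V - {s, t}" "D \<inter> C = {}" "(induced E (D \<union> {s, t}))\<^sup>*\<^sup>* s t"
proof -
  have "C \<noteq> V - {s, t}"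
    using separation_pair C_connected by (auto simp: separation_pair_def)
  then obtain u where u: "u \<in> V - {s, t}" "u \<notin> C"
    using C_subset by blast
  define D where "D = {v. (induced E (V - {s, t}))\<^sup>*\<^sup>* u v}"
  have D: "conn_component E (V - {s, t}) D"
    unfolding D_def using conn_component_reachable[OF graph u(1)] .
  have "u \<in> D"
    by (simp add: D_def)
  then have "D \<inter> C = {}"
    using conn_components_disjoint[OF D component] u(2) by blast
  obtain v1 where v1: "v1 \<in> D" "E s v1"
    using biconnected_component_has_neighbour[OF biconnected poles D] by blast
  have "conn_component E (V - {t, s}) D"
    using D by (simp add: insert_commute)
  then obtain v2 where v2: "v2 \<in> D" "E t v2"
    using biconnected_component_has_neighbour[OF biconnected poles(2,1) poles(3)[symmetric]] by blast
  let ?R = "(induced E (D \<union> {s, t}))\<^sup>*\<^sup>*"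
  have "?R s v1" "?R v2 t"
    using v1 v2 E_sym by (simp_all add: induced_edge)
  moreover have "?R v1 v2"
    using D v1(1) v2(1) unfolding conn_component_def connected_in_iff_induced
    by (blast intro: induced_rtranclp_mono[of E D])
  ultimately have "?R s t"
    by (meson rtranclp_trans)
  moreover have "D \<subseteq> V - {s, t}"
    using D by (simp add: conn_component_def)
  ultimately show thesis
    using that \<open>D \<inter> C = {}\<close> by blast
qed

lemma single_vertex_component:
  assumes "card C \<le> 1"
  obtains w where "C = {w}" "E s w" "E w t"
proof -
  have "card C > 0"
    using component finite_C by (simp add: conn_component_def card_gt_0_iff)
  with assms have "card C = 1"
    by linarith
  then obtain w where "C = {w}"
    by (rule card_1_singletonE)
  moreover have "E s w" "E t w"
    using s_neighbour_in_C sp_light_component.s_neighbour_in_C[OF swap_poles] \<open>C = {w}\<close>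
    by blast+
  ultimately show thesis
    using that E_sym by blast
qed

lemma not_E_if_separates:
  assumes "a \<in> V" "b \<in> V" "a \<noteq> b" "X \<subseteq> V - {a, b}" "x \<in> X" "y \<in> V - {a, b} - X"
    and "\<forall>u\<in>X. \<forall>v. E u v \<longrightarrow> v \<in> X \<union> {a, b}"
  shows "\<not> E a b"
  using separation_pairI[OF assms] no_transitive_edges by (simp add: no_transitive_edges_def)

lemma common_neighbours_not_adjacent:
  assumes "w \<in> C" "d \<in> C" "E s w" "E t w" "E s d" "E t d"
  shows "\<not> E w d"
proof
  assume "E w d"
  obtain D where D: "D \<subseteq> V - {s, t}" "D \<inter> C = {}" "(induced E (D \<union> {s, t}))\<^sup>*\<^sup>* s t"
    using outer_walk by blast
  have "w \<noteq> d"
    using \<open>E w d\<close> graph by (auto simp: graph_def)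
  then have "has_K4_subdivision V E"
    using D(3) assms \<open>E w d\<close>
    by (intro has_K4_subdivisionI[OF graph, of s t w d "D \<union> {s, t}" "{s, w}" "{s, d}" "{t, w}" "{t, d}" "{w, d}"])
       (use D(1,2) C_subset poles in \<open>auto simp: induced_edge\<close>)
  with no_K4 show False ..
qed

lemma exit_to_t_neighbour:
  assumes "w \<in> C" "E s w" and Q: "conn_component E (C - {w} - {v. E t v}) Q"
  obtains q y where "q \<in> Q" "y \<in> C - {w}" "E q y" "E t y"
proof (rule ccontr)
  assume "\<not> thesis"
  then have sealed: "\<forall>q\<in>Q. \<forall>y\<in>C - {w}. E q y \<longrightarrow> \<not> E t y"
    using that by blast
  have Q_sub: "Q \<subseteq> C - {w} - {v. E t v}"
    using Q by (simp add: conn_component_def)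
  obtain d where "d \<in> Q"
    using Q by (auto simp: conn_component_def)
  have "\<not> E s w"
  proof (rule not_E_if_separates)
    show "s \<in> V" "w \<in> V" "s \<noteq> w" "Q \<subseteq> V - {s, w}" "t \<in> V - {s, w} - Q"
      using poles assms(1) Q_sub C_subset by auto
    show "d \<in> Q" by fact
    show "\<forall>v\<in>Q. \<forall>u. E v u \<longrightarrow> u \<in> Q \<union> {s, w}"
    proof (intro ballI allI impI)
      fix v u assume "v \<in> Q" "E v u"
      then have "v \<in> C" "\<not> E t v"
        using Q_sub by auto
      then have "u \<in> C \<or> u = s"
        using neighbour_of_C[OF _ \<open>E v u\<close>] \<open>E v u\<close> E_sym by blast
      moreover have "u \<in> Q" if "u \<in> C - {w}"
        using conn_component_closed[OF graph Q \<open>v \<in> Q\<close> _ \<open>E v u\<close>] sealed \<open>v \<in> Q\<close> \<open>E v u\<close> that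
        by blast
      ultimately show "u \<in> Q \<union> {s, w}"
        by blast
    qed
  qed
  with assms(2) show False by blast
qed

lemma adjacent_to_common_neighbour_imp_E_t:
  assumes w: "w \<in> C" "E s w" "E t w" and d: "d \<in> C" "E w d" "E s d"
  shows "E t d"
proof (rule ccontr)
  assume "\<not> E t d"
  define T where "T = C - {w} - {v. E t v}"
  define Q where "Q = {v. (induced E T)\<^sup>*\<^sup>* d v}"
  have "d \<in> T"
    using d \<open>\<not> E t d\<close> graph by (auto simp: T_def graph_def)
  then have Q: "conn_component E T Q"
    unfolding Q_def using graph by (intro conn_component_reachable)
  then have Q_T: "Q \<subseteq> T"
    by (simp add: conn_component_def)
  obtain q y where gate: "q \<in> Q" "y \<in> C - {w}" "E q y" "E t y"
    using exit_to_t_neighbour[OF w(1,2) Q[unfolded T_def]] by blast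
  obtain D where D: "D \<subseteq> V - {s, t}" "D \<inter> C = {}" "(induced E (D \<union> {s, t}))\<^sup>*\<^sup>* s t"
    using outer_walk by blast
  have q: "q \<in> C" "q \<noteq> w" "\<not> E t q" "E s q"
    using gate(1) Q_T light by (auto simp: T_def)
  have "y \<notin> Q"
    using gate(4) Q_T by (auto simp: T_def)
  have "(induced E {t, y, q})\<^sup>*\<^sup>* t q"
    using gate(3,4) E_sym by (simp add: induced_two_edges)
  moreover have "(induced E (insert w Q))\<^sup>*\<^sup>* w q"
  proof -
    have "(induced E Q)\<^sup>*\<^sup>* d q"
      using gate(1) induced_rtranclp_within_reachable by (simp add: Q_def)
    then have "(induced E (insert w Q))\<^sup>*\<^sup>* d q"
      by (rule induced_rtranclp_mono) blast
    moreover have "(induced E (insert w Q))\<^sup>*\<^sup>* w d"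
      using d(2) by (simp add: Q_def induced_edge)
    ultimately show ?thesis
      by (rule rtranclp_trans[rotated])
  qed
  ultimately have "has_K4_subdivision V E"
    using D(3) w q
    by (intro has_K4_subdivisionI[OF graph, of s t w q "D \<union> {s, t}" "{s, w}" "{s, q}" "{t, w}"
          "{t, y, q}" "insert w Q"])
       (use D(1,2) C_subset poles gate(2) \<open>y \<notin> Q\<close> Q_T in \<open>auto simp: induced_edge T_def disjnt_def\<close>)
  with no_K4 show False ..
qed

lemma no_common_neighbour:
  assumes "card C > 1" "w \<in> C"
  shows "\<not> (E s w \<and> E t w)"
proof
  assume common: "E s w \<and> E t w"
  have "C \<noteq> {w}"
    using assms(1) by auto
  then obtain y where "y \<in> C - {w}"
    using assms(2) by blast
  then obtain x d where "x \<in> {w}" "d \<in> C - {w}" "E x d"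
    using connected_in_edge_leaving[OF C_connected, of w "{w}" y] assms(2) by blast
  then have d: "d \<in> C" "E w d"
    by auto
  have "E s d \<and> E t d"
    using light d common adjacent_to_common_neighbour_imp_E_t[OF assms(2) _ _ d]
      sp_light_component.adjacent_to_common_neighbour_imp_E_t[OF swap_poles assms(2) _ _ d]
    by blast
  with common_neighbours_not_adjacent[OF assms(2) d(1)] common d(2) show False
    by blast
qed

lemma unique_exit_of_connected_s_neighbours:
  assumes Q: "Q \<subseteq> {w \<in> C. E s w}" "connected_in E Q" "q1 \<in> Q" "q2 \<in> Q"
    and z: "z1 \<in> C" "z2 \<in> C" "E q1 z1" "E q2 z2" "E t z1" "E t z2" "\<not> E s z1" "\<not> E s z2"
  shows "q1 = q2"
proof (rule ccontr)
  assume "q1 \<noteq> q2"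
  obtain D where D: "D \<subseteq> V - {s, t}" "D \<inter> C = {}" "(induced E (D \<union> {s, t}))\<^sup>*\<^sup>* s t"
    using outer_walk by blast
  have q: "q1 \<in> C" "q2 \<in> C" "E s q1" "E s q2"
    using Q by auto
  have "z1 \<notin> Q" "z2 \<notin> Q"
    using Q(1) z(7,8) by auto
  have walk_Q: "(induced E Q)\<^sup>*\<^sup>* q1 q2"
    using Q(2-4) by (simp add: connected_in_iff_induced)
  have "has_K4_subdivision V E"
  proof (cases "z1 = z2")
    case False
    have "(induced E {t, z1, q1})\<^sup>*\<^sup>* t q1" "(induced E {t, z2, q2})\<^sup>*\<^sup>* t q2"
      using z E_sym by (simp_all add: induced_two_edges)
    then show ?thesis
      using D(3) walk_Q q z \<open>q1 \<noteq> q2\<close> False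
      by (intro has_K4_subdivisionI[OF graph, of s t q1 q2 "D \<union> {s, t}" "{s, q1}" "{s, q2}"
            "{t, z1, q1}" "{t, z2, q2}" Q])
         (use D(1,2) C_subset poles Q(1) \<open>z1 \<notin> Q\<close> \<open>z2 \<notin> Q\<close> in \<open>auto simp: induced_edge disjnt_def\<close>)
  next
    case True
    \<comment> \<open>the common t-neighbour z1 takes the place of t as a branch vertex, reached from s via t\<close>
    have "(induced E (D \<union> {s, t, z1}))\<^sup>*\<^sup>* s z1"
    proof -
      have "(induced E (D \<union> {s, t, z1}))\<^sup>*\<^sup>* s t"
        using D(3) by (rule induced_rtranclp_mono) blast
      moreover have "(induced E (D \<union> {s, t, z1}))\<^sup>*\<^sup>* t z1"
        using z(5) by (simp add: induced_edge)
      ultimately show ?thesis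
        by (rule rtranclp_trans)
    qed
    then show ?thesis
      using walk_Q q z \<open>q1 \<noteq> q2\<close> True
      by (intro has_K4_subdivisionI[OF graph, of s q1 q2 z1 "{s, q1}" "{s, q2}" "D \<union> {s, t, z1}"
            Q "{q1, z1}" "{q2, z1}"])
         (use D(1,2) C_subset poles Q(1) \<open>z1 \<notin> Q\<close> in \<open>auto simp: induced_edge disjnt_def\<close>)
  qed
  with no_K4 show False ..
qed

lemma second_exit_of_s_neighbour_component:
  assumes no_common: "\<forall>w\<in>C. \<not> (E s w \<and> E t w)"
    and Q: "conn_component E {w \<in> C. E s w} Q" and "q \<in> Q" "x \<in> Q - {q}"
  obtains q' z where "q' \<in> Q - {q}" "z \<in> C" "E q' z" "E t z"
proof (rule ccontr)
  assume "\<not> thesis"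
  then have sealed: "\<forall>q'\<in>Q - {q}. \<forall>z\<in>C. E q' z \<longrightarrow> \<not> E t z"
    using that by blast
  have Q_sub: "Q \<subseteq> {w \<in> C. E s w}"
    using Q by (simp add: conn_component_def)
  have "\<not> E s q"
  proof (rule not_E_if_separates)
    show "s \<in> V" "q \<in> V" "s \<noteq> q" "Q - {q} \<subseteq> V - {s, q}" "t \<in> V - {s, q} - (Q - {q})"
      using poles \<open>q \<in> Q\<close> Q_sub C_subset by auto
    show "x \<in> Q - {q}" by fact
    show "\<forall>v\<in>Q - {q}. \<forall>u. E v u \<longrightarrow> u \<in> Q - {q} \<union> {s, q}"
    proof (intro ballI allI impI)
      fix v u assume "v \<in> Q - {q}" "E v u"
      then have "v \<in> C" "\<not> E t v"
        using Q_sub no_common by auto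
      then have "u \<in> C \<or> u = s"
        using neighbour_of_C[OF _ \<open>E v u\<close>] \<open>E v u\<close> E_sym by blast
      moreover have "u \<in> Q" if "u \<in> C"
      proof -
        have "E s u"
          using light sealed \<open>v \<in> Q - {q}\<close> \<open>E v u\<close> that by blast
        then show "u \<in> Q"
          using conn_component_closed[OF graph Q _ _ \<open>E v u\<close>] \<open>v \<in> Q - {q}\<close> that by blast
      qed
      ultimately show "u \<in> Q - {q} \<union> {s, q}"
        by blast
    qed
  qed
  with \<open>q \<in> Q\<close> Q_sub show False
    by blast
qed

lemma independent_s_neighbours:
  assumes no_common: "\<forall>w\<in>C. \<not> (E s w \<and> E t w)"
  shows "independent E {w \<in> C. E s w}"
  unfolding independent_def
proof (intro ballI notI)
  let ?Vs = "{w \<in> C. E s w}"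
  fix x y assume x: "x \<in> ?Vs" and y: "y \<in> ?Vs" and "E x y"
  define Q where "Q = {v. (induced E ?Vs)\<^sup>*\<^sup>* x v}"
  have Q: "conn_component E ?Vs Q"
    unfolding Q_def using graph x by (rule conn_component_reachable)
  then have Q_Vs: "Q \<subseteq> ?Vs" and "connected_in E Q"
    by (simp_all add: conn_component_def)
  have "x \<in> Q" "y \<in> Q" "x \<noteq> y"
    using x y \<open>E x y\<close> graph by (auto simp: Q_def induced_edge graph_def)
  then obtain q1 z1 where q1: "q1 \<in> Q - {x}" "z1 \<in> C" "E q1 z1" "E t z1"
    using second_exit_of_s_neighbour_component[OF no_common Q] by blast
  then obtain q2 z2 where q2: "q2 \<in> Q - {q1}" "z2 \<in> C" "E q2 z2" "E t z2"
    using second_exit_of_s_neighbour_component[OF no_common Q, of q1 x] \<open>x \<in> Q\<close> by blast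
  have "q1 = q2"
    using unique_exit_of_connected_s_neighbours[OF Q_Vs \<open>connected_in E Q\<close>] q1 q2 no_common
    by blast
  with q2(1) show False
    by blast
qed

lemma no_alternating_path:
  assumes no_common: "\<forall>w\<in>C. \<not> (E s w \<and> E t w)"
    and "a \<in> {w \<in> C. E s w}" "b \<in> {w \<in> C. E s w}" "c \<in> {w \<in> C. E t w}" "d \<in> {w \<in> C. E t w}"
    and "a \<noteq> b" "c \<noteq> d"
  shows "\<not> (E a c \<and> E c b \<and> E b d)"
proof
  assume path: "E a c \<and> E c b \<and> E b d"
  obtain D where D: "D \<subseteq> V - {s, t}" "D \<inter> C = {}" "(induced E (D \<union> {s, t}))\<^sup>*\<^sup>* s t"
    using outer_walk by blast
  have abcd: "a \<in> C" "b \<in> C" "c \<in> C" "d \<in> C" "E s a" "E s b" "E t c" "E t d"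
    "\<not> E t a" "\<not> E t b" "\<not> E s c" "\<not> E s d"
    using assms(2-5) no_common by auto
  have "(induced E {s, a, c})\<^sup>*\<^sup>* s c" "(induced E {t, d, b})\<^sup>*\<^sup>* t b"
    using abcd path E_sym by (simp_all add: induced_two_edges)
  then have "has_K4_subdivision V E"
    using D(3) abcd path assms(6,7)
    by (intro has_K4_subdivisionI[OF graph, of s t b c "D \<union> {s, t}" "{s, b}" "{s, a, c}"
          "{t, d, b}" "{t, c}" "{b, c}"])
       (use D(1,2) C_subset poles E_sym in \<open>auto simp: induced_edge disjnt_def\<close>)
  with no_K4 show False ..
qed

lemma card_s_or_t_neighbours_eq_1:
  assumes "card C > 1"
  shows "card {w \<in> C. E s w} = 1 \<or> card {w \<in> C. E t w} = 1"
proof (rule ccontr)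
  let ?Vs = "{w \<in> C. E s w}" and ?Vt = "{w \<in> C. E t w}"
  assume "\<not> ?thesis"
  then have not_singleton: "\<forall>a. ?Vs \<noteq> {a}" "\<forall>c. ?Vt \<noteq> {c}"
    by auto
  have no_common: "\<forall>w\<in>C. \<not> (E s w \<and> E t w)"
    using no_common_neighbour[OF assms] by blast
  have "?Vs \<union> ?Vt = C"
    using light by auto
  then have connected: "connected_in E (?Vs \<union> ?Vt)"
    using C_connected by simp
  have disjoint: "?Vs \<inter> ?Vt = {}"
    using no_common by blast
  have nonempty: "?Vs \<noteq> {}"
    using s_neighbour_in_C by blast
  have "independent E ?Vt"
    using sp_light_component.independent_s_neighbours[OF swap_poles] no_common by blast
  then obtain a c b d where path: "a \<in> ?Vs" "b \<in> ?Vs" "c \<in> ?Vt" "d \<in> ?Vt" "a \<noteq> b" "c \<noteq> d"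
      "E a c" "E c b" "E b d"
    by (rule connected_bipartite_alternating_path[OF graph_symp[OF graph] connected disjoint
        independent_s_neighbours[OF no_common] _ nonempty not_singleton])
  then show False
    using no_alternating_path[OF no_common path(1-6)] by blast
qed

lemma fan_shape_if_single_t_neighbour:
  assumes "card C > 1" "card {w \<in> C. E t w} = 1"
  shows "fan_shape E s t C"
proof -
  let ?Vs = "{w \<in> C. E s w}"
  obtain t' where t': "{w \<in> C. E t w} = {t'}"
    using assms(2) card_1_singletonE by blast
  have no_common: "\<forall>w\<in>C. \<not> (E s w \<and> E t w)"
    using no_common_neighbour[OF assms(1)] by blast
  have "t' \<in> C" "E t t'" and t'_unique: "\<And>w. w \<in> C \<Longrightarrow> E t w \<Longrightarrow> w = t'"
    using t' by blast+
  have C: "C = insert t' ?Vs"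
    using light \<open>t' \<in> C\<close> t'_unique by blast
  have t'_facts: "t' \<notin> ?Vs" "E t' t" "\<not> E t' s"
    using no_common \<open>t' \<in> C\<close> \<open>E t t'\<close> E_sym by blast+
  have "?Vs \<noteq> {}"
    using s_neighbour_in_C by blast
  have indep: "independent E ?Vs"
    using independent_s_neighbours[OF no_common] .
  have only_s_t': "u = s \<or> u = t'" if "v \<in> ?Vs" "E v u" for v u
  proof -
    have "u \<in> C \<or> u = s \<or> u = t"
      using neighbour_of_C that by blast
    moreover have "u \<noteq> t"
      using that no_common E_sym by blast
    moreover have "u \<notin> ?Vs"
      using that indep unfolding independent_def by blast
    ultimately show ?thesis
      using C by blast
  qed
  have v_facts: "E v s" "\<not> E v t" "E v t'" if v: "v \<in> ?Vs" for v
  proof -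
    show "E v s" "\<not> E v t"
      using v no_common E_sym by auto
    obtain u where "E v u" "u \<noteq> s"
      using biconnected_other_neighbour[OF biconnected, of v s] v C_subset by blast
    then show "E v t'"
      using only_s_t'[OF v] by blast
  qed
  show ?thesis
    unfolding fan_shape_def
    by (intro exI[of _ t'] exI[of _ ?Vs] conjI ballI allI impI)
       (use C t'_facts \<open>?Vs \<noteq> {}\<close> indep only_s_t' v_facts in auto)
qed

end

theorem claim6:
  fixes V :: "'a set" and E :: "'a \<Rightarrow> 'a \<Rightarrow> bool" and s t :: 'a and C :: "'a set"
  assumes "series_parallel V E"
    and "no_transitive_edges V E"
    and "separation_pair V E s t"
    and "light_component V E s t C"
  shows "((\<exists>w. C = {w} \<and> E s w \<and> E w t)
      \<or> (\<exists>t' Vs. C = insert t' Vs \<and> t' \<notin> Vs \<and> Vs \<noteq> {} \<and> independent E Vs \<and>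
            E t' t \<and> \<not> E t' s \<and>
            (\<forall>v\<in>Vs. E v s \<and> E v t' \<and> \<not> E v t \<and> (\<forall>u. E v u \<longrightarrow> u = s \<or> u = t')))
      \<or> (\<exists>s' Vt. C = insert s' Vt \<and> s' \<notin> Vt \<and> Vt \<noteq> {} \<and> independent E Vt \<and>
            E s' s \<and> \<not> E s' t \<and>
            (\<forall>v\<in>Vt. E v t \<and> E v s' \<and> \<not> E v s \<and> (\<forall>u. E v u \<longrightarrow> u = t \<or> u = s'))))
    \<and> (card C > 1 \<longrightarrow>
         (let Vs = {w\<in>C. E s w}; Vt = {w\<in>C. E t w} in
            Vs \<inter> Vt = {} \<and> independent E Vs \<and> independent E Vt \<and> Vs \<union> Vt = C \<and>
            (card Vs = 1 \<or> card Vt = 1)))"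
proof -
  interpret sp_light_component V E s t C
    using assms by (simp add: sp_light_component_def series_parallel_def light_component_def)
  interpret swapped: sp_light_component V E t s C
    by (rule swap_poles)
  show ?thesis
  proof (cases "card C > 1")
    case False
    then have "card C \<le> 1"
      by simp
    then obtain w where "C = {w}" "E s w" "E w t"
      by (rule single_vertex_component)
    with False show ?thesis
      by blast
  next
    case True
    have no_common: "\<forall>w\<in>C. \<not> (E s w \<and> E t w)"
      using no_common_neighbour[OF True] by blast
    have "fan_shape E s t C \<or> fan_shape E t s C"
      using card_s_or_t_neighbours_eq_1[OF True] fan_shape_if_single_t_neighbour[OF True]
        swapped.fan_shape_if_single_t_neighbour[OF True] by blast
    moreover have "independent E {w \<in> C. E s w}" "independent E {w \<in> C. E t w}"
      using independent_s_neighbours swapped.independent_s_neighbours no_common by blast+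
    ultimately show ?thesis
      using no_common light card_s_or_t_neighbours_eq_1[OF True]
      unfolding fan_shape_def Let_def by blast
  qed
qed

end
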